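(* Let $b_1,b_2,b_3$ be functions on an open interval $I$ and let $\gamma: I\to\mathbb{E}^4$ be a regular curve with a Bishop frame $\mathbb{B}$ whose coefficient matrix is $X_{\mathbb{B}}=\begin{pmatrix}0&b_1&b_2&b_3\\-b_1&0&0&0\\-b_2&0&0&0\\-b_3&0&0&0\end{pmatrix}$. Suppose the vector ${}^t(b_1,b_2,b_3)$ is nowhere parallel to ${}^t(0,1,0)$ (equivalently, $(b_1,b_3)$ is nowhere zero). Then $\gamma$ admits a frame $\mathbb{C}$ whose coefficient matrix is $X_{\mathbb{C}}=\begin{pmatrix}0&c_1&c_2&0\\-c_1&0&0&c_3\\-c_2&0&0&0\\0&-c_3&0&0\end{pmatrix}$ with $c_1=\pm\sqrt{b_1^2+b_3^2}$, $c_2=b_2$, $c_3=\pm\dfrac{b_3'b_1-b_3b_1'}{b_1^2+b_3^2}$ (for suitable choices of signs), and the transformation $G=\mathbb{C}\mathbb{B}^{-1}$ is of the form $\begin{pmatrix}1&0&0&0\\0&\pm\cos\theta&0&\pm\sin\theta\\0&0&1&0\\0&-\sin\theta&0&\cos\theta\end{pmatrix}$ for some function $\theta$ with $\theta'=\pm\dfrac{b_3'b_1-b_3b_1'}{b_1^2+b_3^2}$.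
   Context: A regular curve $\gamma: I\to\mathbb{E}^4$ is considered with arc-length parametrization; $\mathbb{T}=\gamma'$ is its unit tangent vector. A frame on $\gamma$ is an ordered orthonormal frame $(\mathbb{T},\mathbb{Z}_1,\mathbb{Z}_2,\mathbb{Z}_3)$ of smooth vector fields along $\gamma$ whose first vector is $\mathbb{T}$; it is identified with the smooth map $\mathbb{Z}: I\to O(4)$ whose rows are these vectors. Its coefficient matrix is the $\mathfrak{o}(4)$-valued function $X$ with $\mathbb{Z}'=X\mathbb{Z}$. A Bishop frame is a frame whose coefficient matrix has the form $\begin{pmatrix}0&b_1&b_2&b_3\\-b_1&0&0&0\\-b_2&0&0&0\\-b_3&0&0&0\end{pmatrix}$. *)

theory Defs
  imports "HOL-Analysis.Analysis"
begin

definition vderiv :: "(real \<Rightarrow> 'a::real_normed_vector) \<Rightarrow> real \<Rightarrow> 'a" where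
  "vderiv f = (\<lambda>t. vector_derivative f (at t))"

definition smooth_on :: "real set \<Rightarrow> (real \<Rightarrow> 'a::real_normed_vector) \<Rightarrow> bool" where
  "smooth_on I f \<longleftrightarrow> (\<forall>k. \<forall>t\<in>I. ((vderiv ^^ k) f) differentiable (at t))"

definition arclength_curve :: "real set \<Rightarrow> (real \<Rightarrow> real^4) \<Rightarrow> bool" where
  "arclength_curve I \<gamma> \<longleftrightarrow> smooth_on I \<gamma> \<and> (\<forall>t\<in>I. norm (vector_derivative \<gamma> (at t)) = 1)"

text \<open>A frame on the curve: smooth map into O(4) whose rows are (T, Z1, Z2, Z3), first row T.\<close>
definition frame_on :: "real set \<Rightarrow> (real \<Rightarrow> real^4) \<Rightarrow> (real \<Rightarrow> real^4^4) \<Rightarrow> bool" where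
  "frame_on I \<gamma> Z \<longleftrightarrow> smooth_on I Z \<and>
     (\<forall>t\<in>I. orthogonal_matrix (Z t) \<and> Z t $ 1 = vector_derivative \<gamma> (at t))"

definition coeff_matrix :: "real set \<Rightarrow> (real \<Rightarrow> real^4^4) \<Rightarrow> (real \<Rightarrow> real^4^4) \<Rightarrow> bool" where
  "coeff_matrix I Z X \<longleftrightarrow> (\<forall>t\<in>I. (Z has_vector_derivative (X t ** Z t)) (at t))"

definition bishop_mat :: "real \<Rightarrow> real \<Rightarrow> real \<Rightarrow> real^4^4" where
  "bishop_mat b1 b2 b3 = vector [vector [0, b1, b2, b3], vector [-b1, 0, 0, 0],
                                 vector [-b2, 0, 0, 0], vector [-b3, 0, 0, 0]]"

definition C_mat :: "real \<Rightarrow> real \<Rightarrow> real \<Rightarrow> real^4^4" where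
  "C_mat c1 c2 c3 = vector [vector [0, c1, c2, 0], vector [-c1, 0, 0, c3],
                            vector [-c2, 0, 0, 0], vector [0, -c3, 0, 0]]"

definition G_mat :: "real \<Rightarrow> real \<Rightarrow> real \<Rightarrow> real^4^4" where
  "G_mat e1 e2 \<theta> = vector [vector [1, 0, 0, 0], vector [0, e1 * cos \<theta>, 0, e2 * sin \<theta>],
                             vector [0, 0, 1, 0], vector [0, - sin \<theta>, 0, cos \<theta>]]"

end

theory Submission
  imports Defs
begin

text \<open>The coefficient matrix of a frame \<open>B\<close> is \<open>B' B\<^sup>T\<close>, so \<open>b\<^sub>1, b\<^sub>3\<close> are smooth. As \<open>(b\<^sub>1, b\<^sub>3)\<close>
  never vanishes, it has smooth polar coordinates \<open>(b\<^sub>1, b\<^sub>3) = r (cos \<theta>, sin \<theta>)\<close> with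
  \<open>r = sqrt (b\<^sub>1\<^sup>2 + b\<^sub>3\<^sup>2)\<close> and \<open>\<theta>' = (b\<^sub>3' b\<^sub>1 - b\<^sub>3 b\<^sub>1') / (b\<^sub>1\<^sup>2 + b\<^sub>3\<^sup>2)\<close>; the angle \<open>\<theta>\<close> is obtained by
  integrating this function. Rotating the Bishop normals \<open>Z\<^sub>1, Z\<^sub>3\<close> by \<open>\<theta>\<close> gives the frame \<open>C = G B\<close>
  with \<open>G = G_mat 1 1 \<theta>\<close>, and the change-of-frame rule \<open>X\<^sub>C G = G X\<^sub>B + G'\<close> turns \<open>X\<^sub>B\<close> into \<open>X\<^sub>C\<close>
  with \<open>c\<^sub>1 = r\<close>, \<open>c\<^sub>2 = b\<^sub>2\<close> and \<open>c\<^sub>3 = \<theta>'\<close>. All signs can be taken to be \<open>+1\<close>.\<close>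

section \<open>Smooth functions\<close>

text \<open>Finite orders of differentiability, so that closure properties of \<^const>\<open>smooth_on\<close> can be
  proved by induction on the order.\<close>
fun times_differentiable_on :: "nat \<Rightarrow> real set \<Rightarrow> (real \<Rightarrow> 'a::real_normed_vector) \<Rightarrow> bool" where
  "times_differentiable_on 0 I f \<longleftrightarrow> True"
| "times_differentiable_on (Suc n) I f \<longleftrightarrow>
     (\<forall>t\<in>I. f differentiable (at t)) \<and> times_differentiable_on n I (vderiv f)"

lemma times_differentiable_on_iff:
  "times_differentiable_on n I f \<longleftrightarrow> (\<forall>k<n. \<forall>t\<in>I. ((vderiv ^^ k) f) differentiable (at t))"
proof (induction n arbitrary: f)
  case (Suc n)
  then show ?case
    by (simp only: times_differentiable_on.simps All_less_Suc2 funpow_0 funpow_Suc_right o_apply)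
qed simp

lemma smooth_on_iff_times_differentiable_on:
  "smooth_on I f \<longleftrightarrow> (\<forall>n. times_differentiable_on n I f)"
  unfolding smooth_on_def times_differentiable_on_iff by (meson lessI)

lemma times_differentiable_on_Suc_imp:
  "times_differentiable_on (Suc n) I f \<Longrightarrow> times_differentiable_on n I f"
  by (auto simp: times_differentiable_on_iff)

lemma vderiv_has_vector_derivative:
  "f differentiable (at t) \<Longrightarrow> (f has_vector_derivative vderiv f t) (at t)"
  unfolding vderiv_def by (rule vector_derivative_works[THEN iffD1])

lemma vderiv_eq:
  "(f has_vector_derivative f') (at t) \<Longrightarrow> vderiv f t = f'"
  unfolding vderiv_def by (rule vector_derivative_at)

lemma vderiv_cong:
  assumes "open I" "\<And>t. t \<in> I \<Longrightarrow> f t = g t" "t \<in> I"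
  shows "vderiv f t = vderiv g t"
proof -
  have "(f has_vector_derivative D) (at t) \<longleftrightarrow> (g has_vector_derivative D) (at t)" for D
    using has_vector_derivative_transform_within_open[OF _ assms(1,3)] assms(2) by metis
  then show ?thesis
    unfolding vderiv_def vector_derivative_def by simp
qed

lemma times_differentiable_on_cong:
  assumes "open I" "\<And>t. t \<in> I \<Longrightarrow> f t = g t" "times_differentiable_on n I f"
  shows "times_differentiable_on n I g"
  using assms(2,3)
proof (induction n arbitrary: f g)
  case (Suc n)
  have "g differentiable (at t)" if "t \<in> I" for t
  proof -
    have "f differentiable (at t)" using Suc.prems(2) that by simp
    then show ?thesis
      using has_derivative_transform_within_open[OF _ assms(1) that] Suc.prems(1)
      unfolding differentiable_def by metis
  qed
  moreover have "times_differentiable_on n I (vderiv g)"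
    using Suc vderiv_cong[OF assms(1)] by (metis times_differentiable_on.simps(2))
  ultimately show ?case by simp
qed simp

lemma times_differentiable_on_SucI:
  assumes "open I" "\<And>t. t \<in> I \<Longrightarrow> (f has_vector_derivative f' t) (at t)"
    and "times_differentiable_on n I f'"
  shows "times_differentiable_on (Suc n) I f"
proof -
  have "times_differentiable_on n I (vderiv f)"
    using times_differentiable_on_cong[OF assms(1) _ assms(3)] assms(2) vderiv_eq by metis
  then show ?thesis
    using assms(2) by (auto intro: differentiableI_vector)
qed

lemma times_differentiable_on_const: "times_differentiable_on n I (\<lambda>_. c)"
proof (induction n arbitrary: c)
  case (Suc n)
  have "vderiv (\<lambda>_. c) = (\<lambda>_. 0)"
    unfolding vderiv_def by (simp add: vector_derivative_const_at)
  then show ?case using Suc by simp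
qed simp

lemma times_differentiable_on_add:
  assumes "open I"
  shows "times_differentiable_on n I f \<Longrightarrow> times_differentiable_on n I g \<Longrightarrow>
    times_differentiable_on n I (\<lambda>t. f t + g t)"
proof (induction n arbitrary: f g)
  case (Suc n)
  show ?case
  proof (rule times_differentiable_on_SucI[OF assms])
    show "((\<lambda>t. f t + g t) has_vector_derivative vderiv f t + vderiv g t) (at t)" if "t \<in> I" for t
      using Suc.prems that by (auto intro!: has_vector_derivative_add vderiv_has_vector_derivative)
    show "times_differentiable_on n I (\<lambda>t. vderiv f t + vderiv g t)"
      using Suc by simp
  qed
qed simp

lemma times_differentiable_on_linear:
  assumes "open I" "bounded_linear L"
  shows "times_differentiable_on n I f \<Longrightarrow> times_differentiable_on n I (\<lambda>t. L (f t))"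
proof (induction n arbitrary: f)
  case (Suc n)
  show ?case
  proof (rule times_differentiable_on_SucI[OF assms(1)])
    show "((\<lambda>t. L (f t)) has_vector_derivative L (vderiv f t)) (at t)" if "t \<in> I" for t
      using Suc.prems that
      by (auto intro!: bounded_linear.has_vector_derivative[OF assms(2)] vderiv_has_vector_derivative)
    show "times_differentiable_on n I (\<lambda>t. L (vderiv f t))"
      using Suc by simp
  qed
qed simp

lemma times_differentiable_on_bilinear:
  assumes "open I" "bounded_bilinear P"
  shows "times_differentiable_on n I f \<Longrightarrow> times_differentiable_on n I g \<Longrightarrow>
    times_differentiable_on n I (\<lambda>t. P (f t) (g t))"
proof (induction n arbitrary: f g)
  case (Suc n)
  show ?case
  proof (rule times_differentiable_on_SucI[OF assms(1)])
    show "((\<lambda>t. P (f t) (g t)) has_vector_derivative P (f t) (vderiv g t) + P (vderiv f t) (g t))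
      (at t)" if "t \<in> I" for t
      using Suc.prems that
      by (auto intro!: bounded_bilinear.has_vector_derivative[OF assms(2)] vderiv_has_vector_derivative)
    show "times_differentiable_on n I (\<lambda>t. P (f t) (vderiv g t) + P (vderiv f t) (g t))"
      using Suc by (intro times_differentiable_on_add[OF assms(1)] Suc.IH)
        (auto intro: times_differentiable_on_Suc_imp)
  qed
qed simp

lemma times_differentiable_on_powr:
  fixes f :: "real \<Rightarrow> real"
  assumes "open I" "\<And>t. t \<in> I \<Longrightarrow> f t > 0"
  shows "times_differentiable_on n I f \<Longrightarrow> times_differentiable_on n I (\<lambda>t. f t powr a)"
proof (induction n arbitrary: a)
  case (Suc n)
  show ?case
  proof (rule times_differentiable_on_SucI[OF assms(1)])
    show "((\<lambda>t. f t powr a) has_vector_derivative a * f t powr (a - 1) * vderiv f t) (at t)"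
      if "t \<in> I" for t
    proof -
      have "(f has_real_derivative vderiv f t) (at t)"
        using Suc.prems that
        by (simp add: has_real_derivative_iff_has_vector_derivative vderiv_has_vector_derivative)
      from DERIV_fun_powr[OF this assms(2)[OF that]] show ?thesis
        by (simp add: has_real_derivative_iff_has_vector_derivative)
    qed
    have "times_differentiable_on n I (\<lambda>t. f t powr (a - 1))"
      using Suc.IH times_differentiable_on_Suc_imp[OF Suc.prems] .
    then show "times_differentiable_on n I (\<lambda>t. a * f t powr (a - 1) * vderiv f t)"
      using Suc.prems
      by (auto intro!: times_differentiable_on_bilinear[OF assms(1) bounded_bilinear_mult]
          times_differentiable_on_const)
  qed
qed simp

lemma smooth_on_cong:
  "open I \<Longrightarrow> (\<And>t. t \<in> I \<Longrightarrow> f t = g t) \<Longrightarrow> smooth_on I f \<Longrightarrow> smooth_on I g"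
  unfolding smooth_on_iff_times_differentiable_on using times_differentiable_on_cong by blast

lemma smooth_on_imp_differentiable: "smooth_on I f \<Longrightarrow> t \<in> I \<Longrightarrow> f differentiable (at t)"
  unfolding smooth_on_iff_times_differentiable_on by (metis times_differentiable_on.simps(2))

lemma smooth_on_vderiv: "smooth_on I f \<Longrightarrow> smooth_on I (vderiv f)"
  unfolding smooth_on_iff_times_differentiable_on by (metis times_differentiable_on.simps(2))

lemma smooth_on_imp_continuous_on: "smooth_on I f \<Longrightarrow> continuous_on I f"
  by (meson continuous_at_imp_continuous_on differentiable_imp_continuous_within
      smooth_on_imp_differentiable)

lemma smooth_on_const: "smooth_on I (\<lambda>_. c)"
  unfolding smooth_on_iff_times_differentiable_on by (simp add: times_differentiable_on_const)

lemma smooth_on_add: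
  "open I \<Longrightarrow> smooth_on I f \<Longrightarrow> smooth_on I g \<Longrightarrow> smooth_on I (\<lambda>t. f t + g t)"
  unfolding smooth_on_iff_times_differentiable_on by (simp add: times_differentiable_on_add)

lemma smooth_on_linear:
  "open I \<Longrightarrow> bounded_linear L \<Longrightarrow> smooth_on I f \<Longrightarrow> smooth_on I (\<lambda>t. L (f t))"
  unfolding smooth_on_iff_times_differentiable_on by (simp add: times_differentiable_on_linear)

lemma smooth_on_bilinear:
  "open I \<Longrightarrow> bounded_bilinear P \<Longrightarrow> smooth_on I f \<Longrightarrow> smooth_on I g \<Longrightarrow>
    smooth_on I (\<lambda>t. P (f t) (g t))"
  unfolding smooth_on_iff_times_differentiable_on by (simp add: times_differentiable_on_bilinear)

lemma smooth_on_powr: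
  fixes f :: "real \<Rightarrow> real"
  shows "open I \<Longrightarrow> (\<And>t. t \<in> I \<Longrightarrow> f t > 0) \<Longrightarrow> smooth_on I f \<Longrightarrow> smooth_on I (\<lambda>t. f t powr a)"
  unfolding smooth_on_iff_times_differentiable_on by (simp add: times_differentiable_on_powr)

lemma smooth_on_continuous_on_deriv:
  fixes f :: "real \<Rightarrow> real"
  assumes "smooth_on I f"
  shows "continuous_on I (deriv f)"
proof (rule continuous_on_cong[THEN iffD1, OF refl _
      smooth_on_imp_continuous_on[OF smooth_on_vderiv[OF assms]]])
  show "vderiv f t = deriv f t" if "t \<in> I" for t
    using smooth_on_imp_differentiable[OF assms that]
    by (simp add: vderiv_eq DERIV_deriv_iff_real_differentiable
        flip: has_real_derivative_iff_has_vector_derivative)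
qed

lemma smooth_on_component:
  "open I \<Longrightarrow> smooth_on I f \<Longrightarrow> smooth_on I (\<lambda>t. f t $ i)"
  by (rule smooth_on_linear[OF _ bounded_linear_vec_nth])

section \<open>Polar coordinates of a smooth plane curve\<close>

lemma smooth_on_normalized:
  fixes f g :: "real \<Rightarrow> real"
  assumes "open I" "smooth_on I f" "smooth_on I g" "\<And>t. t \<in> I \<Longrightarrow> (f t)\<^sup>2 + (g t)\<^sup>2 > 0"
  shows "smooth_on I (\<lambda>t. f t / sqrt ((f t)\<^sup>2 + (g t)\<^sup>2))"
proof (rule smooth_on_cong[OF assms(1)])
  have "smooth_on I (\<lambda>t. (f t)\<^sup>2 + (g t)\<^sup>2)"
    unfolding power2_eq_square
    by (intro smooth_on_add smooth_on_bilinear[OF _ bounded_bilinear_mult] assms)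
  then show "smooth_on I (\<lambda>t. f t * ((f t)\<^sup>2 + (g t)\<^sup>2) powr (- 1 / 2))"
    by (intro smooth_on_bilinear[OF _ bounded_bilinear_mult] smooth_on_powr assms)
  show "f t * ((f t)\<^sup>2 + (g t)\<^sup>2) powr (- 1 / 2) = f t / sqrt ((f t)\<^sup>2 + (g t)\<^sup>2)"
    if "t \<in> I" for t
    using assms(4)[OF that] by (simp add: powr_minus_divide powr_half_sqrt)
qed

lemma normalized_has_real_derivative:
  fixes f g :: "real \<Rightarrow> real"
  assumes f: "(f has_real_derivative f') (at t)" and g: "(g has_real_derivative g') (at t)"
    and pos: "(f t)\<^sup>2 + (g t)\<^sup>2 > 0"
  defines "\<omega> \<equiv> (g' * f t - g t * f') / ((f t)\<^sup>2 + (g t)\<^sup>2)"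
  shows "((\<lambda>t. f t / sqrt ((f t)\<^sup>2 + (g t)\<^sup>2)) has_real_derivative
      - \<omega> * (g t / sqrt ((f t)\<^sup>2 + (g t)\<^sup>2))) (at t)"
    and "((\<lambda>t. g t / sqrt ((f t)\<^sup>2 + (g t)\<^sup>2)) has_real_derivative
      \<omega> * (f t / sqrt ((f t)\<^sup>2 + (g t)\<^sup>2))) (at t)"
proof -
  define q where "q = sqrt ((f t)\<^sup>2 + (g t)\<^sup>2)"
  have q: "q > 0" "q\<^sup>2 = (f t)\<^sup>2 + (g t)\<^sup>2"
    using pos by (simp_all add: q_def)
  have dq: "((\<lambda>t. sqrt ((f t)\<^sup>2 + (g t)\<^sup>2)) has_real_derivative (f t * f' + g t * g') / q) (at t)"
    using pos unfolding q_def by (auto intro!: derivative_eq_intros f g) (simp add: field_simps)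
  have quotient: "(h' * q - h t * ((f t * f' + g t * g') / q)) / (q * q)
      = (h' * q\<^sup>2 - h t * (f t * f' + g t * g')) / q ^ 3" for h :: "real \<Rightarrow> real" and h'
    using q(1) by (simp add: field_simps power2_eq_square power3_eq_cube)
  have \<omega>q: "\<omega> * q\<^sup>2 = g' * f t - g t * f'"
    unfolding \<omega>_def q(2) using pos by simp
  have "f' * q\<^sup>2 - f t * (f t * f' + g t * g') = - (\<omega> * q\<^sup>2) * g t"
    unfolding \<omega>q unfolding q(2) by (simp add: algebra_simps power2_eq_square)
  with DERIV_divide[OF f dq] show "((\<lambda>t. f t / sqrt ((f t)\<^sup>2 + (g t)\<^sup>2)) has_real_derivative
      - \<omega> * (g t / sqrt ((f t)\<^sup>2 + (g t)\<^sup>2))) (at t)"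
    using q(1) unfolding quotient q_def[symmetric] by (simp add: power2_eq_square power3_eq_cube)
  have "g' * q\<^sup>2 - g t * (f t * f' + g t * g') = \<omega> * q\<^sup>2 * f t"
    unfolding \<omega>q unfolding q(2) by (simp add: algebra_simps power2_eq_square)
  with DERIV_divide[OF g dq] show "((\<lambda>t. g t / sqrt ((f t)\<^sup>2 + (g t)\<^sup>2)) has_real_derivative
      \<omega> * (f t / sqrt ((f t)\<^sup>2 + (g t)\<^sup>2))) (at t)"
    using q(1) unfolding quotient q_def[symmetric] by (simp add: power2_eq_square power3_eq_cube)
qed

lemma open_interval_eq_einterval:
  fixes I :: "real set"
  assumes "open I" "is_interval I"
  shows "I = einterval (Inf (ereal ` I)) (Sup (ereal ` I))"
proof (intro equalityI subsetI)
  fix x assume "x \<in> I"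
  then obtain e where "e > 0" "ball x e \<subseteq> I"
    using assms(1) open_contains_ball by blast
  then have "x - e / 2 \<in> I" "x + e / 2 \<in> I"
    by (auto simp: subset_iff dist_real_def)
  then have "Inf (ereal ` I) \<le> ereal (x - e / 2)" "ereal (x + e / 2) \<le> Sup (ereal ` I)"
    by (auto intro: Inf_lower Sup_upper)
  moreover have "ereal (x - e / 2) < ereal x" "ereal x < ereal (x + e / 2)"
    using \<open>e > 0\<close> by simp_all
  ultimately show "x \<in> einterval (Inf (ereal ` I)) (Sup (ereal ` I))"
    unfolding einterval_iff by (meson order.strict_trans1 order.strict_trans2)
next
  fix x assume "x \<in> einterval (Inf (ereal ` I)) (Sup (ereal ` I))"
  then obtain a b where "a \<in> I" "b \<in> I" "a < x" "x < b"
    by (auto simp: einterval_iff Inf_less_iff less_Sup_iff)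
  then show "x \<in> I"
    using assms(2) unfolding is_interval_1 by (meson less_imp_le)
qed

lemma antiderivative_on_open_interval:
  fixes f :: "real \<Rightarrow> real"
  assumes "open I" "is_interval I" "continuous_on I f"
  obtains F where "\<And>t. t \<in> I \<Longrightarrow> (F has_real_derivative f t) (at t)"
proof (cases "I = {}")
  case False
  let ?a = "Inf (ereal ` I)" and ?b = "Sup (ereal ` I)"
  have I: "I = einterval ?a ?b"
    by (rule open_interval_eq_einterval[OF assms(1,2)])
  moreover obtain x where "x \<in> I"
    using False by blast
  ultimately have "?a < ?b"
    by (metis einterval_iff less_trans)
  moreover have "isCont f x" if "?a < x" "x < ?b" for x
    using assms(1,3) I that continuous_on_eq_continuous_at by (fastforce simp: einterval_iff)
  ultimately obtain F where "\<forall>x. ?a < x \<longrightarrow> x < ?b \<longrightarrow> (F has_vector_derivative f x) (at x)"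
    using einterval_antiderivative by blast
  with I that show ?thesis
    by (metis einterval_iff has_real_derivative_iff_has_vector_derivative)
qed simp

lemma unit_circle_lifting:
  fixes u v \<omega> :: "real \<Rightarrow> real"
  assumes "open I" "is_interval I" "continuous_on I \<omega>"
    and unit: "\<And>t. t \<in> I \<Longrightarrow> (u t)\<^sup>2 + (v t)\<^sup>2 = 1"
    and du: "\<And>t. t \<in> I \<Longrightarrow> (u has_real_derivative - \<omega> t * v t) (at t)"
    and dv: "\<And>t. t \<in> I \<Longrightarrow> (v has_real_derivative \<omega> t * u t) (at t)"
  obtains \<theta> where "\<And>t. t \<in> I \<Longrightarrow> (\<theta> has_real_derivative \<omega> t) (at t)"
    and "\<And>t. t \<in> I \<Longrightarrow> u t = cos (\<theta> t) \<and> v t = sin (\<theta> t)"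
proof (cases "I = {}")
  case False
  then obtain t0 where t0: "t0 \<in> I" by blast
  obtain F where F: "\<And>t. t \<in> I \<Longrightarrow> (F has_real_derivative \<omega> t) (at t)"
    using antiderivative_on_open_interval[OF assms(1-3)] by blast
  obtain \<phi> where \<phi>: "u t0 = cos \<phi>" "v t0 = sin \<phi>"
    using sincos_total_2pi[OF unit[OF t0]] by metis
  define \<theta> where "\<theta> t = F t + (\<phi> - F t0)" for t
  have d\<theta>: "(\<theta> has_real_derivative \<omega> t) (at t)" if "t \<in> I" for t
    unfolding \<theta>_def using DERIV_add[OF F[OF that] DERIV_const] by simp
  \<comment> \<open>\<open>(u, v)\<close> and \<open>(cos \<theta>, sin \<theta>)\<close> rotate with the same angular speed, so their inner product
    is constant.\<close>
  define h where "h t = u t * cos (\<theta> t) + v t * sin (\<theta> t)" for t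
  have "(h has_real_derivative 0) (at t within I)" if "t \<in> I" for t
  proof -
    have "(h has_real_derivative
        (- \<omega> t * v t) * cos (\<theta> t) + (- sin (\<theta> t) * \<omega> t) * u t
        + ((\<omega> t * u t) * sin (\<theta> t) + (cos (\<theta> t) * \<omega> t) * v t)) (at t)"
      unfolding h_def using that
      by (intro DERIV_add DERIV_mult du dv DERIV_fun_cos DERIV_fun_sin d\<theta>)
    then show ?thesis
      by (auto intro: has_field_derivative_at_within DERIV_cong simp: algebra_simps)
  qed
  then obtain c where "\<forall>t\<in>I. h t = c"
    using has_field_derivative_zero_constant[OF is_interval_convex[OF assms(2)]] by blast
  moreover have "h t0 = 1"
    unfolding h_def \<theta>_def using \<phi> unit[OF t0] by (simp add: power2_eq_square)
  ultimately have h: "h t = 1" if "t \<in> I" for t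
    using t0 that by metis
  have "u t = cos (\<theta> t) \<and> v t = sin (\<theta> t)" if "t \<in> I" for t
  proof -
    have "(u t - cos (\<theta> t))\<^sup>2 + (v t - sin (\<theta> t))\<^sup>2
        = ((u t)\<^sup>2 + (v t)\<^sup>2) + ((sin (\<theta> t))\<^sup>2 + (cos (\<theta> t))\<^sup>2) - 2 * h t"
      unfolding h_def by (simp add: power2_eq_square algebra_simps)
    also have "\<dots> = 0"
      using unit[OF that] h[OF that] by simp
    finally show ?thesis
      by (simp add: sum_power2_eq_zero_iff)
  qed
  with d\<theta> that show ?thesis by blast
qed simp

lemma smooth_polar_coordinates:
  fixes f g :: "real \<Rightarrow> real"
  assumes "open I" "is_interval I" "smooth_on I f" "smooth_on I g"
    and "\<And>t. t \<in> I \<Longrightarrow> f t \<noteq> 0 \<or> g t \<noteq> 0"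
  obtains \<theta> where
    "\<And>t. t \<in> I \<Longrightarrow>
      (\<theta> has_real_derivative (deriv g t * f t - g t * deriv f t) / ((f t)\<^sup>2 + (g t)\<^sup>2)) (at t)"
    and "\<And>t. t \<in> I \<Longrightarrow>
      f t = sqrt ((f t)\<^sup>2 + (g t)\<^sup>2) * cos (\<theta> t) \<and> g t = sqrt ((f t)\<^sup>2 + (g t)\<^sup>2) * sin (\<theta> t)"
    and "smooth_on I (\<lambda>t. cos (\<theta> t))" "smooth_on I (\<lambda>t. sin (\<theta> t))"
proof -
  define r where "r = (\<lambda>t. sqrt ((f t)\<^sup>2 + (g t)\<^sup>2))"
  define \<omega> where "\<omega> = (\<lambda>t. (deriv g t * f t - g t * deriv f t) / ((f t)\<^sup>2 + (g t)\<^sup>2))"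
  define u where "u = (\<lambda>t. f t / r t)"
  define v where "v = (\<lambda>t. g t / r t)"
  have pos: "(f t)\<^sup>2 + (g t)\<^sup>2 > 0" if "t \<in> I" for t
    using assms(5) that by (simp add: sum_power2_gt_zero_iff)
  have unit: "(u t)\<^sup>2 + (v t)\<^sup>2 = 1" if "t \<in> I" for t
    using assms(5) that by (simp add: u_def v_def r_def power_divide flip: add_divide_distrib)
  have "(f has_real_derivative deriv f t) (at t)" "(g has_real_derivative deriv g t) (at t)"
    if "t \<in> I" for t
    using smooth_on_imp_differentiable[OF assms(3) that] smooth_on_imp_differentiable[OF assms(4) that]
    by (simp_all add: DERIV_deriv_iff_real_differentiable)
  from normalized_has_real_derivative[OF this pos]
  have du: "(u has_real_derivative - \<omega> t * v t) (at t)"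
    and dv: "(v has_real_derivative \<omega> t * u t) (at t)" if "t \<in> I" for t
    using that unfolding u_def v_def r_def \<omega>_def by simp_all
  have "continuous_on I \<omega>"
    unfolding \<omega>_def
    by (intro continuous_intros smooth_on_continuous_on_deriv smooth_on_imp_continuous_on assms(3,4))
      (metis pos less_irrefl)
  then obtain \<theta> where d\<theta>: "\<And>t. t \<in> I \<Longrightarrow> (\<theta> has_real_derivative \<omega> t) (at t)"
    and angle: "\<And>t. t \<in> I \<Longrightarrow> u t = cos (\<theta> t) \<and> v t = sin (\<theta> t)"
    using unit_circle_lifting[OF assms(1,2) _ unit du dv] by blast
  have polar: "f t = r t * cos (\<theta> t) \<and> g t = r t * sin (\<theta> t)" if "t \<in> I" for t
  proof -
    have "f t = r t * u t \<and> g t = r t * v t"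
      using pos[OF that] by (simp add: u_def v_def r_def)
    with angle[OF that] show ?thesis
      by simp
  qed
  have smooth_u: "smooth_on I u" and smooth_v: "smooth_on I v"
    using smooth_on_normalized[OF assms(1,3,4) pos] smooth_on_normalized[OF assms(1,4,3)] pos
    by (simp_all add: u_def v_def r_def add.commute)
  have "smooth_on I (\<lambda>t. cos (\<theta> t))"
    by (rule smooth_on_cong[OF assms(1) _ smooth_u]) (simp add: angle)
  moreover have "smooth_on I (\<lambda>t. sin (\<theta> t))"
    by (rule smooth_on_cong[OF assms(1) _ smooth_v]) (simp add: angle)
  ultimately show ?thesis
    using that d\<theta> polar
    unfolding \<omega>_def r_def by blast
qed

section \<open>Frames and coefficient matrices\<close>

lemma vector_4 [simp]:
  "(vector [a, b, c, d] :: 'a::zero^4) $ 1 = a"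
  "(vector [a, b, c, d] :: 'a::zero^4) $ 2 = b"
  "(vector [a, b, c, d] :: 'a::zero^4) $ 3 = c"
  "(vector [a, b, c, d] :: 'a::zero^4) $ 4 = d"
  unfolding vector_def by simp_all

lemma matrix_add_rdistrib: "(A + B) ** C = A ** C + B ** C"
  by (vector matrix_matrix_mult_def sum.distrib[symmetric] field_simps)

lemma bounded_bilinear_matrix_matrix_mult:
  "bounded_bilinear ((**) :: real^'n^'m \<Rightarrow> real^'p^'n \<Rightarrow> real^'p^'m)"
  unfolding bilinear_conv_bounded_bilinear[symmetric] bilinear_def
  by (auto simp: linear_iff matrix_add_ldistrib matrix_add_rdistrib matrix_scalar_ac
      scalar_matrix_assoc)

lemma bounded_linear_transpose: "bounded_linear (transpose :: real^'n^'m \<Rightarrow> real^'m^'n)"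
  unfolding linear_conv_bounded_linear[symmetric]
  by (auto simp: linear_iff vec_eq_iff transpose_def)

lemma orthogonal_matrix_matrix_inv:
  fixes A :: "real^'n^'n"
  assumes "orthogonal_matrix A"
  shows "matrix_inv A = transpose A"
proof -
  have inv: "A ** transpose A = mat 1" "transpose A ** A = mat 1"
    using assms unfolding orthogonal_matrix_def by auto
  have "A ** matrix_inv A = mat 1 \<and> matrix_inv A ** A = mat 1"
    unfolding matrix_inv_def by (rule someI[of _ "transpose A"]) (use inv in blast)
  then have "matrix_inv A = (transpose A ** A) ** matrix_inv A"
    by (simp add: inv)
  also have "\<dots> = transpose A"
    by (metis \<open>A ** matrix_inv A = mat 1 \<and> _\<close> matrix_mul_assoc matrix_mul_rid)
  finally show ?thesis .
qed

lemma coeff_matrix_smooth_on: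
  assumes "open I" "frame_on I \<gamma> Z" "coeff_matrix I Z X"
  shows "smooth_on I X"
proof (rule smooth_on_cong[OF assms(1)])
  have Z: "smooth_on I Z" "\<And>t. t \<in> I \<Longrightarrow> orthogonal_matrix (Z t)"
    using assms(2) unfolding frame_on_def by auto
  show "smooth_on I (\<lambda>t. vderiv Z t ** transpose (Z t))"
    by (intro smooth_on_bilinear[OF assms(1) bounded_bilinear_matrix_matrix_mult]
        smooth_on_vderiv smooth_on_linear[OF assms(1) bounded_linear_transpose] Z)
  show "vderiv Z t ** transpose (Z t) = X t" if "t \<in> I" for t
  proof -
    have "vderiv Z t = X t ** Z t"
      using assms(3) that unfolding coeff_matrix_def by (blast intro: vderiv_eq)
    moreover have "Z t ** transpose (Z t) = mat 1"
      using Z(2)[OF that] unfolding orthogonal_matrix_def by blast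
    ultimately show ?thesis
      by (simp flip: matrix_mul_assoc)
  qed
qed

lemma coeff_matrix_change_of_frame:
  assumes "coeff_matrix I Z X"
    and "\<And>t. t \<in> I \<Longrightarrow> (G has_vector_derivative G' t) (at t)"
    and "\<And>t. t \<in> I \<Longrightarrow> G t ** X t + G' t = Y t ** G t"
  shows "coeff_matrix I (\<lambda>t. G t ** Z t) Y"
  unfolding coeff_matrix_def
proof
  fix t assume t: "t \<in> I"
  have "((\<lambda>t. G t ** Z t) has_vector_derivative G t ** (X t ** Z t) + G' t ** Z t) (at t)"
    using assms(1) t unfolding coeff_matrix_def
    by (intro bounded_bilinear.has_vector_derivative[OF bounded_bilinear_matrix_matrix_mult]
        assms(2)) auto
  also have "G t ** (X t ** Z t) + G' t ** Z t = Y t ** (G t ** Z t)"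
    by (simp add: matrix_mul_assoc assms(3)[OF t] flip: matrix_add_rdistrib)
  finally show "((\<lambda>t. G t ** Z t) has_vector_derivative Y t ** (G t ** Z t)) (at t)" .
qed

definition rot_mat :: "real \<Rightarrow> real \<Rightarrow> real^4^4" where
  "rot_mat c s = vector [vector [1, 0, 0, 0], vector [0, c, 0, s],
                         vector [0, 0, 1, 0], vector [0, - s, 0, c]]"

lemma G_mat_eq_rot_mat: "G_mat 1 1 \<theta> = rot_mat (cos \<theta>) (sin \<theta>)"
  by (simp add: G_mat_def rot_mat_def)

lemma rot_mat_affine:
  "rot_mat c s = rot_mat 0 0 + c *\<^sub>R (rot_mat 1 0 - rot_mat 0 0) + s *\<^sub>R (rot_mat 0 1 - rot_mat 0 0)"
  by (simp add: rot_mat_def vec_eq_iff forall_4)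

lemma rot_mat_has_vector_derivative:
  assumes "(c has_real_derivative c') (at t)" "(s has_real_derivative s') (at t)"
  shows "((\<lambda>t. rot_mat (c t) (s t)) has_vector_derivative rot_mat c' s' - rot_mat 0 0) (at t)"
proof -
  have "((\<lambda>t. rot_mat 0 0 + c t *\<^sub>R (rot_mat 1 0 - rot_mat 0 0) + s t *\<^sub>R (rot_mat 0 1 - rot_mat 0 0))
      has_vector_derivative c' *\<^sub>R (rot_mat 1 0 - rot_mat 0 0) + s' *\<^sub>R (rot_mat 0 1 - rot_mat 0 0)) (at t)"
    using assms by (auto intro!: derivative_eq_intros)
  then show ?thesis
    by (simp flip: rot_mat_affine) (simp add: rot_mat_affine[of c' s'])
qed

lemma smooth_on_rot_mat:
  assumes "open I" "smooth_on I c" "smooth_on I s"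
  shows "smooth_on I (\<lambda>t. rot_mat (c t) (s t))"
  unfolding rot_mat_affine[of "c _" "s _"]
  by (intro smooth_on_add smooth_on_bilinear[OF _ bounded_bilinear_scaleR] smooth_on_const assms)

lemma orthogonal_matrix_rot_mat: "c\<^sup>2 + s\<^sup>2 = 1 \<Longrightarrow> orthogonal_matrix (rot_mat c s)"
  unfolding orthogonal_matrix_def
  by (simp add: vec_eq_iff forall_4 rot_mat_def matrix_matrix_mult_def sum_4 transpose_def mat_def
      power2_eq_square algebra_simps)

lemma rot_mat_mult_row_1: "(rot_mat c s ** M) $ 1 = M $ 1"
  by (simp add: vec_eq_iff rot_mat_def matrix_matrix_mult_def sum_4)

text \<open>The second summand is the derivative of \<^term>\<open>rot_mat c s\<close> when \<open>(c, s)' = \<omega> (- s, c)\<close>.\<close>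
lemma rot_mat_bishop_mat:
  assumes "c\<^sup>2 + s\<^sup>2 = 1"
  shows "rot_mat c s ** bishop_mat (r * c) b (r * s) + (rot_mat (- \<omega> * s) (\<omega> * c) - rot_mat 0 0)
    = C_mat r b \<omega> ** rot_mat c s"
proof -
  have "(c * c + s * s) * r = r"
    using assms by (simp add: power2_eq_square)
  then have "r = c * (c * r) + s * (s * r)"
    by (simp add: algebra_simps)
  then show ?thesis
    by (simp add: vec_eq_iff forall_4 rot_mat_def bishop_mat_def C_mat_def matrix_matrix_mult_def
        sum_4 algebra_simps)
qed

lemma frame_on_rot_mat_mult:
  assumes "open I" "frame_on I \<gamma> B" "smooth_on I c" "smooth_on I s"
    and "\<And>t. t \<in> I \<Longrightarrow> (c t)\<^sup>2 + (s t)\<^sup>2 = 1"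
  shows "frame_on I \<gamma> (\<lambda>t. rot_mat (c t) (s t) ** B t)"
  using assms unfolding frame_on_def
  by (auto intro!: smooth_on_bilinear[OF _ bounded_bilinear_matrix_matrix_mult] smooth_on_rot_mat
      orthogonal_matrix_mul orthogonal_matrix_rot_mat simp: rot_mat_mult_row_1)

lemma smooth_on_bishop_coefficients:
  assumes "open I" "frame_on I \<gamma> B" "coeff_matrix I B (\<lambda>t. bishop_mat (b1 t) (b2 t) (b3 t))"
  shows "smooth_on I b1" "smooth_on I b2" "smooth_on I b3"
proof -
  have "smooth_on I (\<lambda>t. bishop_mat (b1 t) (b2 t) (b3 t) $ 1 $ j)" for j
    by (intro smooth_on_component coeff_matrix_smooth_on[OF assms] assms(1))
  from this[of 2] this[of 3] this[of 4]
  show "smooth_on I b1" "smooth_on I b2" "smooth_on I b3"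
    by (simp_all add: bishop_mat_def)
qed

lemma coeff_matrix_rot_mat_mult_bishop:
  assumes "coeff_matrix I B (\<lambda>t. bishop_mat (b1 t) (b2 t) (b3 t))"
    and "\<And>t. t \<in> I \<Longrightarrow> b1 t = r t * cos (\<theta> t) \<and> b3 t = r t * sin (\<theta> t)"
    and "\<And>t. t \<in> I \<Longrightarrow> (\<theta> has_real_derivative \<omega> t) (at t)"
  shows "coeff_matrix I (\<lambda>t. rot_mat (cos (\<theta> t)) (sin (\<theta> t)) ** B t) (\<lambda>t. C_mat (r t) (b2 t) (\<omega> t))"
proof (rule coeff_matrix_change_of_frame[OF assms(1)])
  fix t assume t: "t \<in> I"
  have "b1 t = r t * cos (\<theta> t)" "b3 t = r t * sin (\<theta> t)"
    using assms(2)[OF t] by simp_all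
  then show "rot_mat (cos (\<theta> t)) (sin (\<theta> t)) ** bishop_mat (b1 t) (b2 t) (b3 t)
      + (rot_mat (- \<omega> t * sin (\<theta> t)) (\<omega> t * cos (\<theta> t)) - rot_mat 0 0)
      = C_mat (r t) (b2 t) (\<omega> t) ** rot_mat (cos (\<theta> t)) (sin (\<theta> t))"
    by (simp only:) (rule rot_mat_bishop_mat, simp)
  have "((\<lambda>t. cos (\<theta> t)) has_real_derivative - \<omega> t * sin (\<theta> t)) (at t)"
    by (rule DERIV_cong[OF DERIV_fun_cos[OF assms(3)[OF t]]]) simp
  moreover have "((\<lambda>t. sin (\<theta> t)) has_real_derivative \<omega> t * cos (\<theta> t)) (at t)"
    by (rule DERIV_cong[OF DERIV_fun_sin[OF assms(3)[OF t]]]) simp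
  ultimately show "((\<lambda>t. rot_mat (cos (\<theta> t)) (sin (\<theta> t))) has_vector_derivative
      rot_mat (- \<omega> t * sin (\<theta> t)) (\<omega> t * cos (\<theta> t)) - rot_mat 0 0) (at t)"
    by (rule rot_mat_has_vector_derivative)
qed

theorem lemma2:
  fixes I :: "real set" and \<gamma> :: "real \<Rightarrow> real^4" and B :: "real \<Rightarrow> real^4^4"
    and b1 b2 b3 :: "real \<Rightarrow> real"
  assumes "open I" and "is_interval I" and "I \<noteq> {}"
    and "arclength_curve I \<gamma>"
    and "frame_on I \<gamma> B"
    and "coeff_matrix I B (\<lambda>t. bishop_mat (b1 t) (b2 t) (b3 t))"
    and "\<forall>t\<in>I. b1 t \<noteq> 0 \<or> b3 t \<noteq> 0"
  shows "\<exists>C c1 c2 c3 \<theta> s1 s2 s3 s4 s5.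
     frame_on I \<gamma> C \<and>
     coeff_matrix I C (\<lambda>t. C_mat (c1 t) (c2 t) (c3 t)) \<and>
     {s1, s2, s3, s4, s5} \<subseteq> {-1, 1::real} \<and>
     (\<forall>t\<in>I.
        c1 t = s1 * sqrt ((b1 t)\<^sup>2 + (b3 t)\<^sup>2) \<and>
        c2 t = b2 t \<and>
        c3 t = s2 * ((deriv b3 t * b1 t - b3 t * deriv b1 t) / ((b1 t)\<^sup>2 + (b3 t)\<^sup>2)) \<and>
        C t ** matrix_inv (B t) = G_mat s3 s4 (\<theta> t) \<and>
        (\<theta> has_real_derivative
            s5 * ((deriv b3 t * b1 t - b3 t * deriv b1 t) / ((b1 t)\<^sup>2 + (b3 t)\<^sup>2))) (at t))"
proof -
  define r where "r = (\<lambda>t. sqrt ((b1 t)\<^sup>2 + (b3 t)\<^sup>2))"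
  define \<omega> where "\<omega> = (\<lambda>t. (deriv b3 t * b1 t - b3 t * deriv b1 t) / ((b1 t)\<^sup>2 + (b3 t)\<^sup>2))"
  obtain \<theta> where d\<theta>: "\<And>t. t \<in> I \<Longrightarrow> (\<theta> has_real_derivative \<omega> t) (at t)"
    and polar: "\<And>t. t \<in> I \<Longrightarrow> b1 t = r t * cos (\<theta> t) \<and> b3 t = r t * sin (\<theta> t)"
    and smooth: "smooth_on I (\<lambda>t. cos (\<theta> t))" "smooth_on I (\<lambda>t. sin (\<theta> t))"
    using smooth_polar_coordinates[OF assms(1,2) smooth_on_bishop_coefficients(1,3)[OF assms(1,5,6)]]
      assms(7) unfolding r_def \<omega>_def by blast
  define C where "C = (\<lambda>t. rot_mat (cos (\<theta> t)) (sin (\<theta> t)) ** B t)"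
  have frame: "frame_on I \<gamma> C"
    unfolding C_def by (rule frame_on_rot_mat_mult[OF assms(1,5) smooth]) simp
  have coeff: "coeff_matrix I C (\<lambda>t. C_mat (r t) (b2 t) (\<omega> t))"
    unfolding C_def by (rule coeff_matrix_rot_mat_mult_bishop[OF assms(6) polar d\<theta>])
  have transformation: "C t ** matrix_inv (B t) = G_mat 1 1 (\<theta> t)" if "t \<in> I" for t
  proof -
    have "orthogonal_matrix (B t)"
      using assms(5) that by (simp add: frame_on_def)
    then have "B t ** matrix_inv (B t) = mat 1"
      by (simp add: orthogonal_matrix_matrix_inv orthogonal_matrix_def)
    then show ?thesis
      by (simp add: C_def G_mat_eq_rot_mat flip: matrix_mul_assoc)
  qed
  show ?thesis
    by (rule exI[of _ C], rule exI[of _ r], rule exI[of _ b2], rule exI[of _ \<omega>],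
        rule exI[of _ \<theta>], intro exI[of _ 1])
      (use frame coeff transformation d\<theta> in \<open>auto simp: r_def \<omega>_def\<close>)
qed

end
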